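(* Let $\mathbf{X}\in\{0,1\}^{m\times n}$ and let $C\subseteq\mathrm{supp}(\mathbf{X})$ be the vertex set of an odd hole of size $|C|=2k+1$ in $\mathcal{G}(\mathbf{X})$, and suppose $Q:=\mathrm{supp}(\mathbf{X})\setminus C$ is nonempty. Then $i(\mathcal{S}^Q(\mathbf{X}))=k+|Q|$ and $br(\mathcal{S}^Q(\mathbf{X}))=k+1+|Q|$; in particular $\mathcal{S}^Q(\mathbf{X})$ is not firm.
   Context: For a binary matrix $\mathbf{X}$, $\mathrm{supp}(\mathbf{X})=\{(i,j):x_{i,j}=1\}$; a rectangle is a set $I\times J\subseteq\mathrm{supp}(\mathbf{X})$. An isolated set is a subset of $\mathrm{supp}(\mathbf{X})$ no two distinct elements of which lie in a common rectangle; $i(\mathbf{X})$ is its maximum size, and $br(\mathbf{X})$ is the minimum number of rectangles whose union is $\mathrm{supp}(\mathbf{X})$. $\mathbf{X}$ is firm if $i(\mathbf{X}')=br(\mathbf{X}')$ for every submatrix $\mathbf{X}'$ (including $\mathbf{X}$). The rectangle cover graph $\mathcal{G}(\mathbf{X})$ has vertex set $\mathrm{supp}(\mathbf{X})$, two vertices adjacent iff some rectangle contains both. An odd hole is an induced chordless cycle of odd length at least $5$. Stretching: for nonempty $Q=\{(\ell_1,k_1),\dots,(\ell_q,k_q)\}\subseteq\mathrm{supp}(\mathbf{X})$ listed in lexicographic order, $\mathcal{S}^Q(\mathbf{X})$ is the $(m+q)\times(n+q)$ binary matrix whose top-left $m\times n$ block is $\mathbf{X}$, whose entries at $(\ell_t,n+t)$,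 $(m+t,k_t)$, $(m+t,n+t)$ equal $1$ for each $t\in[q]$, and all of whose other entries are $0$. *)

theory Defs
  imports Main "HOL-Library.Product_Lexorder"
begin

text \<open>A binary m x n matrix is modelled as a Boolean function on index pairs
  (0-indexed); only entries with row < m and column < n matter.\<close>

definition supp :: "nat \<Rightarrow> nat \<Rightarrow> (nat \<Rightarrow> nat \<Rightarrow> bool) \<Rightarrow> (nat \<times> nat) set" where
  "supp m n X = {(i, j). i < m \<and> j < n \<and> X i j}"

definition rectangle :: "(nat \<times> nat) set \<Rightarrow> (nat \<times> nat) set \<Rightarrow> bool" where
  "rectangle S R \<longleftrightarrow> (\<exists>I J. R = I \<times> J) \<and> R \<subseteq> S"

definition isolated_set :: "(nat \<times> nat) set \<Rightarrow> (nat \<times> nat) set \<Rightarrow> bool" where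
  "isolated_set S A \<longleftrightarrow> A \<subseteq> S \<and>
     (\<forall>x\<in>A. \<forall>y\<in>A. x \<noteq> y \<longrightarrow> \<not> (\<exists>R. rectangle S R \<and> x \<in> R \<and> y \<in> R))"

definition isol_num :: "(nat \<times> nat) set \<Rightarrow> nat" where
  "isol_num S = Max {card A | A. isolated_set S A}"

definition rect_cover_num :: "(nat \<times> nat) set \<Rightarrow> nat" where
  "rect_cover_num S = Min {card F | F. finite F \<and> (\<forall>R\<in>F. rectangle S R) \<and> \<Union>F = S}"

definition firm :: "nat \<Rightarrow> nat \<Rightarrow> (nat \<Rightarrow> nat \<Rightarrow> bool) \<Rightarrow> bool" where
  "firm m n X \<longleftrightarrow> (\<forall>I J. I \<subseteq> {..<m} \<longrightarrow> J \<subseteq> {..<n} \<longrightarrow>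
      isol_num (supp m n X \<inter> (I \<times> J)) = rect_cover_num (supp m n X \<inter> (I \<times> J)))"

definition rc_adj :: "(nat \<times> nat) set \<Rightarrow> nat \<times> nat \<Rightarrow> nat \<times> nat \<Rightarrow> bool" where
  "rc_adj S x y \<longleftrightarrow> x \<in> S \<and> y \<in> S \<and> x \<noteq> y \<and> (\<exists>R. rectangle S R \<and> x \<in> R \<and> y \<in> R)"

definition odd_hole :: "(nat \<times> nat) set \<Rightarrow> (nat \<times> nat) set \<Rightarrow> bool" where
  "odd_hole S C \<longleftrightarrow> (\<exists>vs. distinct vs \<and> set vs = C \<and> C \<subseteq> S \<and>
      odd (length vs) \<and> length vs \<ge> 5 \<and>
      (\<forall>i < length vs. \<forall>j < length vs.
         rc_adj S (vs ! i) (vs ! j) \<longleftrightarrow>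
           (j = Suc i mod length vs \<or> i = Suc j mod length vs)))"

text \<open>Stretching: Q listed in lexicographic order as (l_t,k_t), t = 0..q-1 (0-indexed);
  result is an (m+q) x (n+q) matrix.\<close>

definition stretch :: "nat \<Rightarrow> nat \<Rightarrow> (nat \<Rightarrow> nat \<Rightarrow> bool) \<Rightarrow> (nat \<times> nat) set
    \<Rightarrow> nat \<Rightarrow> nat \<Rightarrow> bool" where
  "stretch m n X Q i j =
     (if i < m \<and> j < n then X i j
      else (let qs = sorted_list_of_set Q in
        \<exists>t < length qs. (i = fst (qs ! t) \<and> j = n + t) \<or> (i = m + t \<and> j = snd (qs ! t))
                        \<or> (i = m + t \<and> j = n + t)))"

end

theory Submission
  imports Defs
begin

text \<open>Stretching turns each \<open>(\<ell>\<^sub>t, k\<^sub>t) \<in> Q\<close> into an all-ones \<open>2 \<times> 2\<close> gadget on rows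
  \<open>{\<ell>\<^sub>t, m + t}\<close> and columns \<open>{k\<^sub>t, n + t}\<close>. The new corner \<open>(m + t, n + t)\<close> is alone in its
  row and column apart from the gadget, so every rectangle through it lies in the gadget and misses
  the hole \<open>C\<close>. Rectangles meet \<open>C\<close> in at most two (cyclically consecutive) vertices, and an
  isolated set meets \<open>C\<close> in an independent set of the odd cycle and each gadget in at most one
  point. Hence \<open>i \<le> k + |Q|\<close>, attained by every other vertex of the hole together with the
  corners; and a cover needs \<open>k + 1\<close> rectangles for the \<open>2k + 1\<close> hole vertices plus one
  rectangle per corner, attained by \<open>k\<close> edge rectangles, a singleton and the gadgets.\<close>

lemma finite_supp: "finite (supp m n X)"
  by (rule finite_subset[of _ "{..<m} \<times> {..<n}"]) (auto simp: supp_def)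

lemma rectangle_mono: "S \<subseteq> T \<Longrightarrow> rectangle S R \<Longrightarrow> rectangle T R"
  by (auto simp: rectangle_def)

lemma rectangle_restrict:
  assumes "rectangle T R" "T \<inter> (A \<times> B) \<subseteq> S"
  shows "rectangle S (R \<inter> (A \<times> B))"
proof -
  obtain I J where "R = I \<times> J" "R \<subseteq> T" using assms(1) by (auto simp: rectangle_def)
  then have "R \<inter> (A \<times> B) = (I \<inter> A) \<times> (J \<inter> B)" "R \<inter> (A \<times> B) \<subseteq> S" using assms(2) by auto
  then show ?thesis unfolding rectangle_def by blast
qed

lemma rectangle_singleton: "x \<in> S \<Longrightarrow> rectangle S {x}"
  unfolding rectangle_def by (intro conjI exI[of _ "{fst x}"] exI[of _ "{snd x}"]) auto

lemma card_isolated_Int_rectangle_le_1: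
  assumes "isolated_set S A" "rectangle S R"
  shows "card (R \<inter> A) \<le> 1"
proof (cases "R \<inter> A = {}")
  case False
  then obtain x where x: "x \<in> R \<inter> A" by blast
  have "R \<inter> A \<subseteq> {x}" using assms x unfolding isolated_set_def by blast
  then show ?thesis using card_mono[of "{x}"] by simp
qed simp

definition rectangle_cover :: "(nat \<times> nat) set \<Rightarrow> (nat \<times> nat) set set \<Rightarrow> bool" where
  "rectangle_cover S F \<longleftrightarrow> finite F \<and> (\<forall>R\<in>F. rectangle S R) \<and> \<Union>F = S"

lemma isol_num_eqI:
  assumes "finite S" "\<And>A. isolated_set S A \<Longrightarrow> card A \<le> N" "isolated_set S A" "card A = N"
  shows "isol_num S = N"
  unfolding isol_num_def
proof (rule Max_eqI)
  have "{card A |A. isolated_set S A} \<subseteq> card ` Pow S" by (auto simp: isolated_set_def)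
  then show "finite {card A |A. isolated_set S A}"
    by (rule finite_subset) (use assms(1) in simp)
  show "N \<in> {card A |A. isolated_set S A}" using assms(3,4) by blast
qed (use assms(2) in blast)

lemma rect_cover_num_eqI:
  assumes "finite S" "\<And>F. rectangle_cover S F \<Longrightarrow> N \<le> card F" "rectangle_cover S F" "card F \<le> N"
  shows "rect_cover_num S = N"
  unfolding rect_cover_num_def
proof (rule Min_eqI)
  let ?N = "{card F |F. finite F \<and> (\<forall>R\<in>F. rectangle S R) \<and> \<Union>F = S}"
  have "?N \<subseteq> card ` Pow (Pow S)" by (auto simp: rectangle_def)
  then show "finite ?N" by (rule finite_subset) (use assms(1) in simp)
  have "card F = N" using assms(2-4) by (simp add: le_antisym)
  then show "N \<in> ?N" using assms(3) unfolding rectangle_cover_def by blast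
  show "N \<le> y" if "y \<in> ?N" for y
    using that assms(2) unfolding rectangle_cover_def by blast
qed

lemma firm_imp_isol_num_eq_rect_cover_num:
  assumes "firm m n X"
  shows "isol_num (supp m n X) = rect_cover_num (supp m n X)"
proof -
  have "supp m n X \<inter> ({..<m} \<times> {..<n}) = supp m n X" by (auto simp: supp_def)
  then show ?thesis using assms unfolding firm_def by (metis subset_refl)
qed

lemma card_le_mult_card_cover:
  assumes "finite F" "P \<subseteq> \<Union>F" "\<And>R. R \<in> F \<Longrightarrow> card (R \<inter> P) \<le> c"
  shows "card P \<le> c * card F"
proof -
  have "P = (\<Union>R\<in>F. R \<inter> P)" using assms(2) by auto
  then have "card P \<le> (\<Sum>R\<in>F. card (R \<inter> P))" using card_UN_le[OF assms(1)] by metis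
  also have "\<dots> \<le> c * card F" using sum_mono[of F _ "\<lambda>_. c"] assms(3) by (simp add: mult.commute)
  finally show ?thesis .
qed

lemma subset_Union_meeting: "P \<subseteq> \<Union>F \<Longrightarrow> P \<subseteq> \<Union>{R \<in> F. R \<inter> P \<noteq> {}}"
  by blast

lemma Suc_mod_less: "i < L \<Longrightarrow> Suc i mod L = (if Suc i = L then 0 else Suc i)"
  by auto

lemma two_card_le_if_no_cyclic_successor:
  assumes "I \<subseteq> {..<L}" "\<And>i. i \<in> I \<Longrightarrow> Suc i mod L \<notin> I"
  shows "2 * card I \<le> L"
proof -
  let ?succ = "\<lambda>i. Suc i mod L"
  have "inj_on ?succ I"
  proof (rule inj_onI)
    fix x y assume "x \<in> I" "y \<in> I" "?succ x = ?succ y"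
    moreover have "x < L" "y < L" using assms(1) \<open>x \<in> I\<close> \<open>y \<in> I\<close> by auto
    ultimately show "x = y" by (simp add: Suc_mod_less split: if_splits)
  qed
  moreover have "?succ ` I \<subseteq> {..<L} - I" using assms by auto
  moreover have "finite I" using assms(1) finite_subset by blast
  ultimately have "card I + card (?succ ` I) = card (I \<union> ?succ ` I)"
    by (subst card_Un_disjoint) auto
  also have "\<dots> \<le> card {..<L}" using assms(1) \<open>?succ ` I \<subseteq> {..<L} - I\<close> by (intro card_mono) auto
  finally show ?thesis using card_image[OF \<open>inj_on ?succ I\<close>] by simp
qed

lemma no_cyclic_triangle:
  "4 \<le> L \<Longrightarrow> i < L \<Longrightarrow> j < L \<Longrightarrow> l < L \<Longrightarrow> i \<noteq> j \<Longrightarrow> j \<noteq> l \<Longrightarrow> i \<noteq> l \<Longrightarrow>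
    j = Suc i mod L \<or> i = Suc j mod L \<Longrightarrow> l = Suc j mod L \<or> j = Suc l mod L \<Longrightarrow>
    l = Suc i mod L \<or> i = Suc l mod L \<Longrightarrow> False"
  by (simp add: Suc_mod_less split: if_splits; linarith)

locale induced_odd_cycle =
  fixes E :: "'a \<Rightarrow> 'a \<Rightarrow> bool" and vs :: "'a list" and k :: nat
  assumes distinct_vs: "distinct vs"
    and length_vs: "length vs = 2 * k + 1"
    and two_le_k: "2 \<le> k"
    and adj_iff: "\<And>i j. i < length vs \<Longrightarrow> j < length vs \<Longrightarrow>
       E (vs ! i) (vs ! j) \<longleftrightarrow> j = Suc i mod length vs \<or> i = Suc j mod length vs"
begin

lemma card_independent_le:
  assumes "B \<subseteq> set vs" "\<And>x y. x \<in> B \<Longrightarrow> y \<in> B \<Longrightarrow> x \<noteq> y \<Longrightarrow> \<not> E x y"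
  shows "card B \<le> k"
proof -
  define I where "I = {i. i < length vs \<and> vs ! i \<in> B}"
  have "B = (!) vs ` I"
  proof (intro set_eqI iffI)
    fix x assume "x \<in> B"
    then obtain i where "i < length vs" "vs ! i = x" using assms(1) by (metis in_set_conv_nth subsetD)
    then show "x \<in> (!) vs ` I" using \<open>x \<in> B\<close> by (auto simp: I_def)
  qed (auto simp: I_def)
  moreover have "inj_on ((!) vs) I" using distinct_vs by (simp add: inj_on_nth I_def)
  ultimately have "card B = card I" by (simp add: card_image)
  moreover have "2 * card I \<le> length vs"
  proof (rule two_card_le_if_no_cyclic_successor)
    show "I \<subseteq> {..<length vs}" by (auto simp: I_def)
    fix i assume i: "i \<in> I"
    let ?j = "Suc i mod length vs"
    have "i < length vs" using i by (simp add: I_def)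
    moreover have "?j < length vs" using length_vs by simp
    moreover have "?j \<noteq> i" using \<open>i < length vs\<close> length_vs two_le_k by (simp add: Suc_mod_less)
    ultimately have "vs ! i \<noteq> vs ! ?j" "E (vs ! i) (vs ! ?j)"
      using distinct_vs adj_iff by (auto simp: nth_eq_iff_index_eq)
    then show "?j \<notin> I" using assms(2) i by (auto simp: I_def)
  qed
  ultimately show ?thesis using length_vs by simp
qed

lemma card_clique_le_2:
  assumes "B \<subseteq> set vs" "\<And>x y. x \<in> B \<Longrightarrow> y \<in> B \<Longrightarrow> x \<noteq> y \<Longrightarrow> E x y"
  shows "card B \<le> 2"
proof (rule ccontr)
  assume "\<not> card B \<le> 2"
  then obtain B3 where "B3 \<subseteq> B" "card B3 = 3"
    by (metis obtain_subset_with_card_n not_less_eq_eq numeral_3_eq_3 numeral_2_eq_2)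
  then obtain x y z where xyz: "x \<in> B" "y \<in> B" "z \<in> B" "x \<noteq> y" "y \<noteq> z" "x \<noteq> z"
    by (auto simp: card_3_iff)
  then obtain i j l where ijl: "i < length vs" "j < length vs" "l < length vs"
    "vs ! i = x" "vs ! j = y" "vs ! l = z"
    using assms(1) by (metis in_set_conv_nth subsetD)
  have "E (vs ! i) (vs ! j)" "E (vs ! j) (vs ! l)" "E (vs ! i) (vs ! l)"
    using assms(2) xyz ijl by auto
  then show False
    using no_cyclic_triangle[of "length vs" i j l] ijl xyz adj_iff length_vs two_le_k by auto
qed

lemma E_nth_Suc: "Suc i < length vs \<Longrightarrow> E (vs ! i) (vs ! Suc i)"
  using adj_iff[of i "Suc i"] by simp

lemma not_E_nth_even:
  assumes "i < k" "j < k" "i \<noteq> j"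
  shows "\<not> E (vs ! (2 * i)) (vs ! (2 * j))"
proof
  assume "E (vs ! (2 * i)) (vs ! (2 * j))"
  moreover have "Suc (2 * i) < length vs" "Suc (2 * j) < length vs" using assms length_vs by auto
  ultimately have "2 * j = Suc (2 * i) \<or> 2 * i = Suc (2 * j)" using adj_iff by simp
  then show False by presburger
qed

lemma set_vs_eq: "set vs = insert (vs ! (2 * k)) (\<Union>i<k. {vs ! (2 * i), vs ! Suc (2 * i)})"
proof -
  have "set vs = (!) vs ` {..<2 * k + 1}" using length_vs by (auto simp: in_set_conv_nth)
  also have "{..<2 * k + 1} = insert (2 * k) (\<Union>i<k. {2 * i, Suc (2 * i)})"
  proof (intro set_eqI iffI)
    fix j assume "j \<in> {..<2 * k + 1}"
    then show "j \<in> insert (2 * k) (\<Union>i<k. {2 * i, Suc (2 * i)})"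
      by (auto intro!: bexI[of _ "j div 2"])
  qed auto
  finally show ?thesis by auto
qed

end

locale stretched_hole = induced_odd_cycle "rc_adj (supp m n X)" vs k
  for m n :: nat and X :: "nat \<Rightarrow> nat \<Rightarrow> bool" and vs :: "(nat \<times> nat) list" and k :: nat +
  fixes Q :: "(nat \<times> nat) set"
  assumes hole_subset_supp: "set vs \<subseteq> supp m n X"
    and Q_eq: "Q = supp m n X - set vs"
begin

abbreviation "S \<equiv> supp m n X"
abbreviation "C \<equiv> set vs"
abbreviation "qs \<equiv> sorted_list_of_set Q"
abbreviation "q \<equiv> card Q"
abbreviation "T \<equiv> supp (m + q) (n + q) (stretch m n X Q)"

abbreviation corner :: "nat \<Rightarrow> nat \<times> nat" where
  "corner t \<equiv> (m + t, n + t)"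

abbreviation gadget :: "nat \<Rightarrow> (nat \<times> nat) set" where
  "gadget t \<equiv> {fst (qs ! t), m + t} \<times> {snd (qs ! t), n + t}"

lemma finite_Q: "finite Q"
  using Q_eq finite_supp by simp

lemma length_qs: "length qs = q"
  using finite_Q by simp

lemma Q_eq_qs: "Q = (!) qs ` {..<q}"
  using finite_Q length_qs by (metis set_sorted_list_of_set atLeast_upt set_map map_nth)

lemma qs_in_supp: "t < q \<Longrightarrow> qs ! t \<in> S - C"
  using Q_eq_qs Q_eq by blast

lemma qs_bounds: "t < q \<Longrightarrow> fst (qs ! t) < m \<and> snd (qs ! t) < n"
  using qs_in_supp[of t] by (cases "qs ! t") (auto simp: supp_def)

lemma T_eq: "T = S \<union> (\<Union>t<q. gadget t)"
proof (intro set_eqI iffI)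
  fix p assume "p \<in> T"
  then show "p \<in> S \<union> (\<Union>t<q. gadget t)"
    using length_qs by (cases p) (auto simp: supp_def stretch_def Let_def split: if_splits)
next
  fix p assume "p \<in> S \<union> (\<Union>t<q. gadget t)"
  then show "p \<in> T"
    using length_qs qs_bounds qs_in_supp
    by (cases p) (fastforce simp: supp_def stretch_def Let_def)
qed

lemma T_eq_hole_Un_gadgets: "T = C \<union> (\<Union>t<q. gadget t)"
proof -
  have "Q \<subseteq> (\<Union>t<q. gadget t)" using Q_eq_qs by (auto simp: prod_eq_iff)
  then show ?thesis using T_eq Q_eq hole_subset_supp by auto
qed

lemma S_subset_T: "S \<subseteq> T"
  using T_eq by blast

lemma rectangle_gadget: "t < q \<Longrightarrow> rectangle T (gadget t)"
  using T_eq unfolding rectangle_def by blast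

lemma T_Int_old_block: "T \<inter> ({..<m} \<times> {..<n}) \<subseteq> S"
proof
  fix p assume p: "p \<in> T \<inter> ({..<m} \<times> {..<n})"
  show "p \<in> S"
  proof (rule ccontr)
    assume "p \<notin> S"
    then obtain t where "t < q" "p \<in> gadget t" using p unfolding T_eq by blast
    moreover have "fst p < m" "snd p < n" using p by auto
    ultimately have "p = qs ! t" unfolding mem_Times_iff by (auto intro: prod_eqI)
    then show False using qs_in_supp \<open>t < q\<close> \<open>p \<notin> S\<close> by blast
  qed
qed

lemma T_new_rowD:
  assumes "(m + t, j) \<in> T"
  shows "t < q \<and> j \<in> {snd (qs ! t), n + t}"
proof -
  have "(m + t, j) \<notin> S" by (simp add: supp_def)
  then obtain t' where "t' < q" "(m + t, j) \<in> gadget t'" using assms unfolding T_eq by blast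
  then have t': "t' < q" "m + t \<in> {fst (qs ! t'), m + t'}" "j \<in> {snd (qs ! t'), n + t'}"
    unfolding mem_Times_iff fst_conv snd_conv by blast+
  moreover have "m + t \<noteq> fst (qs ! t')" using qs_bounds[OF t'(1)] by simp
  ultimately show ?thesis by auto
qed

lemma T_new_colD:
  assumes "(i, n + t) \<in> T"
  shows "t < q \<and> i \<in> {fst (qs ! t), m + t}"
proof -
  have "(i, n + t) \<notin> S" by (simp add: supp_def)
  then obtain t' where "t' < q" "(i, n + t) \<in> gadget t'" using assms unfolding T_eq by blast
  then have t': "t' < q" "i \<in> {fst (qs ! t'), m + t'}" "n + t \<in> {snd (qs ! t'), n + t'}"
    unfolding mem_Times_iff fst_conv snd_conv by blast+
  moreover have "n + t \<noteq> snd (qs ! t')" using qs_bounds[OF t'(1)] by simp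
  ultimately show ?thesis by auto
qed

lemma rectangle_corner_subset_gadget:
  assumes "rectangle T R" "corner t \<in> R"
  shows "R \<subseteq> gadget t"
proof
  fix p assume "p \<in> R"
  obtain I J where "R = I \<times> J" "R \<subseteq> T" using assms(1) by (auto simp: rectangle_def)
  then have "(m + t, snd p) \<in> T" "(fst p, n + t) \<in> T" using assms(2) \<open>p \<in> R\<close> by auto
  then have "fst p \<in> {fst (qs ! t), m + t}" "snd p \<in> {snd (qs ! t), n + t}"
    using T_new_rowD T_new_colD by blast+
  then show "p \<in> gadget t" unfolding mem_Times_iff by blast
qed

lemma gadget_Int_hole: "t < q \<Longrightarrow> gadget t \<inter> C = {}"
  using qs_in_supp qs_bounds hole_subset_supp by (auto simp: supp_def)

lemma corner_in_gadget: "t < q \<Longrightarrow> corner t' \<in> gadget t \<Longrightarrow> t' = t"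
  using qs_bounds[of t] unfolding mem_Times_iff by auto

lemma rectangle_corner_Int:
  assumes "rectangle T R" "t < q" "corner t \<in> R"
  shows "R \<inter> (C \<union> corner ` {..<q}) = {corner t}"
proof -
  have R: "R \<subseteq> gadget t" by (rule rectangle_corner_subset_gadget[OF assms(1,3)])
  then have "R \<inter> C = {}" using gadget_Int_hole[OF assms(2)] by blast
  moreover have "R \<inter> corner ` {..<q} \<subseteq> {corner t}"
    using R corner_in_gadget[OF assms(2)] by blast
  ultimately show ?thesis using assms(2,3) by blast
qed

lemma rectangle_T_rc_adj:
  assumes "rectangle T R" "x \<in> R \<inter> C" "y \<in> R \<inter> C" "x \<noteq> y"
  shows "rc_adj S x y"
proof -
  have "rectangle S (R \<inter> ({..<m} \<times> {..<n}))"
    by (rule rectangle_restrict[OF assms(1) T_Int_old_block])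
  moreover have "x \<in> S" "y \<in> S" using assms(2,3) hole_subset_supp by auto
  moreover then have "x \<in> R \<inter> ({..<m} \<times> {..<n})" "y \<in> R \<inter> ({..<m} \<times> {..<n})"
    using assms(2,3) by (auto simp: supp_def)
  ultimately show ?thesis using assms(4) unfolding rc_adj_def by blast
qed

lemma card_isolated_le:
  assumes "isolated_set T A"
  shows "card A \<le> k + q"
proof -
  have "A \<subseteq> T" using assms by (simp add: isolated_set_def)
  then have "finite A" using finite_supp finite_subset by blast
  have "card (A \<inter> C) \<le> k"
  proof (rule card_independent_le)
    fix x y assume "x \<in> A \<inter> C" "y \<in> A \<inter> C" "x \<noteq> y"
    then show "\<not> rc_adj S x y"
      using assms rectangle_mono[OF S_subset_T] unfolding isolated_set_def rc_adj_def by blast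
  qed auto
  moreover have "card (A - C) \<le> 1 * card (gadget ` {..<q})"
  proof (rule card_le_mult_card_cover)
    show "A - C \<subseteq> \<Union> (gadget ` {..<q})" using \<open>A \<subseteq> T\<close> T_eq_hole_Un_gadgets by blast
    fix R assume "R \<in> gadget ` {..<q}"
    then have "card (R \<inter> A) \<le> 1"
      using card_isolated_Int_rectangle_le_1[OF assms] rectangle_gadget by blast
    moreover have "card (R \<inter> (A - C)) \<le> card (R \<inter> A)"
      using \<open>finite A\<close> by (intro card_mono) auto
    ultimately show "card (R \<inter> (A - C)) \<le> 1" by simp
  qed simp
  moreover have "card (gadget ` {..<q}) \<le> q" using card_image_le[of "{..<q}"] by simp
  moreover have "card A \<le> card (A \<inter> C) + card (A - C)"
    using card_Un_le[of "A \<inter> C" "A - C"] by (simp add: Int_Diff_Un)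
  ultimately show ?thesis by linarith
qed

lemma isolated_even_vertices_Un_corners:
  "isolated_set T ((\<lambda>i. vs ! (2 * i)) ` {..<k} \<union> corner ` {..<q})"
  (is "isolated_set T (?H \<union> ?K)")
  unfolding isolated_set_def
proof (intro conjI ballI impI notI)
  have "?H \<subseteq> C" using length_vs by auto
  then show "?H \<union> ?K \<subseteq> T"
    using hole_subset_supp S_subset_T rectangle_gadget by (auto simp: rectangle_def)
  fix x y assume xy: "x \<in> ?H \<union> ?K" "y \<in> ?H \<union> ?K" "x \<noteq> y"
    and "\<exists>R. rectangle T R \<and> x \<in> R \<and> y \<in> R"
  then obtain R where R: "rectangle T R" "x \<in> R" "y \<in> R" by blast
  have "R \<inter> ?K = {}"
  proof (rule ccontr)
    assume "R \<inter> ?K \<noteq> {}"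
    then obtain t where "t < q" "corner t \<in> R" by auto
    then have "R \<inter> (C \<union> ?K) = {corner t}" using rectangle_corner_Int[OF R(1)] by simp
    moreover have "x \<in> R \<inter> (C \<union> ?K)" "y \<in> R \<inter> (C \<union> ?K)" using R xy \<open>?H \<subseteq> C\<close> by auto
    ultimately show False using \<open>x \<noteq> y\<close> by simp
  qed
  then obtain i j where "i < k" "j < k" "x = vs ! (2 * i)" "y = vs ! (2 * j)" using R xy by auto
  moreover have "rc_adj S x y"
    using rectangle_T_rc_adj[OF R(1)] R xy \<open>?H \<subseteq> C\<close> \<open>R \<inter> ?K = {}\<close> by blast
  ultimately show False using not_E_nth_even \<open>x \<noteq> y\<close> by blast
qed

lemma ex_isolated_card_eq: "\<exists>A. isolated_set T A \<and> card A = k + q"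
proof -
  let ?H = "(\<lambda>i. vs ! (2 * i)) ` {..<k}" and ?K = "corner ` {..<q}"
  have "card ?H = k"
    using distinct_vs length_vs by (subst card_image) (auto simp: inj_on_def nth_eq_iff_index_eq)
  moreover have "card ?K = q" by (subst card_image) (auto simp: inj_on_def)
  moreover have "?H \<inter> ?K = {}"
  proof -
    have "?H \<subseteq> C" using length_vs by auto
    moreover have "?K \<inter> S = {}" by (auto simp: supp_def)
    ultimately show ?thesis using hole_subset_supp by blast
  qed
  ultimately have "card (?H \<union> ?K) = k + q" by (simp add: card_Un_disjoint)
  then show ?thesis using isolated_even_vertices_Un_corners by blast
qed

lemma card_hole_le_rectangles_meeting_hole:
  assumes "rectangle_cover T F"
  shows "2 * k + 1 \<le> 2 * card {R \<in> F. R \<inter> C \<noteq> {}}"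
proof -
  have "card C \<le> 2 * card {R \<in> F. R \<inter> C \<noteq> {}}"
  proof (rule card_le_mult_card_cover)
    show "finite {R \<in> F. R \<inter> C \<noteq> {}}" using assms by (simp add: rectangle_cover_def)
    show "C \<subseteq> \<Union>{R \<in> F. R \<inter> C \<noteq> {}}"
      using assms hole_subset_supp S_subset_T
      by (intro subset_Union_meeting) (auto simp: rectangle_cover_def)
    fix R assume "R \<in> {R \<in> F. R \<inter> C \<noteq> {}}"
    then have "rectangle T R" using assms by (simp add: rectangle_cover_def)
    then show "card (R \<inter> C) \<le> 2"
      by (intro card_clique_le_2) (auto intro: rectangle_T_rc_adj)
  qed
  then show ?thesis using distinct_card[OF distinct_vs] length_vs by simp
qed

lemma card_corners_le_rectangles_meeting_corners:
  assumes "rectangle_cover T F"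
  shows "q \<le> card {R \<in> F. R \<inter> corner ` {..<q} \<noteq> {}}"
proof -
  let ?K = "corner ` {..<q}"
  have "card ?K \<le> 1 * card {R \<in> F. R \<inter> ?K \<noteq> {}}"
  proof (rule card_le_mult_card_cover)
    show "finite {R \<in> F. R \<inter> ?K \<noteq> {}}" using assms by (simp add: rectangle_cover_def)
    have "?K \<subseteq> T" using rectangle_gadget by (auto simp: rectangle_def)
    then show "?K \<subseteq> \<Union>{R \<in> F. R \<inter> ?K \<noteq> {}}"
      using assms by (intro subset_Union_meeting) (auto simp: rectangle_cover_def)
    fix R assume R: "R \<in> {R \<in> F. R \<inter> ?K \<noteq> {}}"
    then obtain t where "t < q" "corner t \<in> R" by auto
    moreover have "rectangle T R" using R assms by (simp add: rectangle_cover_def)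
    ultimately have "R \<inter> ?K \<subseteq> {corner t}" using rectangle_corner_Int by blast
    then show "card (R \<inter> ?K) \<le> 1" using card_mono[of "{corner t}"] by simp
  qed
  moreover have "card ?K = q" by (subst card_image) (auto simp: inj_on_def)
  ultimately show ?thesis by simp
qed

lemma card_rectangle_cover_ge:
  assumes "rectangle_cover T F"
  shows "k + 1 + q \<le> card F"
proof -
  define F\<^sub>C where "F\<^sub>C = {R \<in> F. R \<inter> C \<noteq> {}}"
  define F\<^sub>K where "F\<^sub>K = {R \<in> F. R \<inter> corner ` {..<q} \<noteq> {}}"
  have "finite F" using assms by (simp add: rectangle_cover_def)
  have "F\<^sub>C \<inter> F\<^sub>K = {}"
  proof (rule ccontr)
    assume "F\<^sub>C \<inter> F\<^sub>K \<noteq> {}"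
    then obtain R t where R: "R \<in> F" "R \<inter> C \<noteq> {}" "t < q" "corner t \<in> R"
      by (auto simp: F\<^sub>C_def F\<^sub>K_def)
    then have "rectangle T R" using assms by (simp add: rectangle_cover_def)
    then have "R \<inter> C \<subseteq> {corner t}" using rectangle_corner_Int[of R t] R by blast
    moreover have "corner t \<notin> C" using gadget_Int_hole[OF \<open>t < q\<close>] by blast
    ultimately show False using R(2) by blast
  qed
  then have "card F\<^sub>C + card F\<^sub>K = card (F\<^sub>C \<union> F\<^sub>K)"
    using \<open>finite F\<close> by (intro card_Un_disjoint[symmetric]) (auto simp: F\<^sub>C_def F\<^sub>K_def)
  also have "\<dots> \<le> card F" using \<open>finite F\<close> by (intro card_mono) (auto simp: F\<^sub>C_def F\<^sub>K_def)
  finally show ?thesis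
    using card_hole_le_rectangles_meeting_hole[OF assms]
      card_corners_le_rectangles_meeting_corners[OF assms]
    unfolding F\<^sub>C_def F\<^sub>K_def by linarith
qed

lemma ex_rectangle_cover_card_le: "\<exists>F. rectangle_cover T F \<and> card F \<le> k + 1 + q"
proof -
  have "\<forall>i\<in>{..<k}. \<exists>R. rectangle S R \<and> vs ! (2 * i) \<in> R \<and> vs ! Suc (2 * i) \<in> R"
    using E_nth_Suc length_vs unfolding rc_adj_def by auto
  then obtain P where
    P: "\<And>i. i < k \<Longrightarrow> rectangle S (P i) \<and> vs ! (2 * i) \<in> P i \<and> vs ! Suc (2 * i) \<in> P i"
    by (metis bchoice lessThan_iff)
  define F where "F = insert {vs ! (2 * k)} (P ` {..<k} \<union> gadget ` {..<q})"
  have rect: "rectangle T R" if "R \<in> F" for R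
  proof -
    have "vs ! (2 * k) \<in> C" using length_vs by (intro nth_mem) simp
    then have "rectangle T {vs ! (2 * k)}"
      using hole_subset_supp S_subset_T by (intro rectangle_singleton) blast
    then show ?thesis
      using that P rectangle_mono[OF S_subset_T] rectangle_gadget by (auto simp: F_def)
  qed
  have "T \<subseteq> \<Union>F"
  proof -
    have "C \<subseteq> \<Union>F" using P by (subst set_vs_eq) (fastforce simp: F_def)
    then show ?thesis using T_eq_hole_Un_gadgets by (auto simp: F_def)
  qed
  then have "rectangle_cover T F"
    using rect by (auto simp: rectangle_cover_def rectangle_def F_def)
  moreover have "card F \<le> k + 1 + q"
  proof -
    have "card F \<le> Suc (card (P ` {..<k} \<union> gadget ` {..<q}))"
      by (simp add: F_def card_insert_if)
    also have "\<dots> \<le> Suc (card (P ` {..<k}) + card (gadget ` {..<q}))" by (simp add: card_Un_le)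
    also have "\<dots> \<le> k + 1 + q"
      using card_image_le[of "{..<k}" P] card_image_le[of "{..<q}" gadget] by simp
    finally show ?thesis .
  qed
  ultimately show ?thesis by blast
qed

end

theorem mainTheorem9:
  fixes m n k :: nat and X :: "nat \<Rightarrow> nat \<Rightarrow> bool" and C Q :: "(nat \<times> nat) set"
  assumes "odd_hole (supp m n X) C"
    and "card C = 2 * k + 1"
    and "Q = supp m n X - C"
    and "Q \<noteq> {}"
  shows "isol_num (supp (m + card Q) (n + card Q) (stretch m n X Q)) = k + card Q \<and>
         rect_cover_num (supp (m + card Q) (n + card Q) (stretch m n X Q)) = k + 1 + card Q \<and>
         \<not> firm (m + card Q) (n + card Q) (stretch m n X Q)"
proof -
  obtain vs where vs: "distinct vs" "set vs = C" "C \<subseteq> supp m n X" "5 \<le> length vs"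
    "\<forall>i < length vs. \<forall>j < length vs. rc_adj (supp m n X) (vs ! i) (vs ! j) \<longleftrightarrow>
       j = Suc i mod length vs \<or> i = Suc j mod length vs"
    using assms(1) unfolding odd_hole_def by blast
  moreover have "length vs = 2 * k + 1" using distinct_card[OF vs(1)] vs(2) assms(2) by simp
  ultimately interpret stretched_hole m n X vs k Q
    using assms(3) by unfold_locales auto
  have "isol_num T = k + q"
    using isol_num_eqI[OF finite_supp card_isolated_le] ex_isolated_card_eq by blast
  moreover have "rect_cover_num T = k + 1 + q"
    using rect_cover_num_eqI[OF finite_supp card_rectangle_cover_ge] ex_rectangle_cover_card_le
    by blast
  ultimately show ?thesis using firm_imp_isol_num_eq_rect_cover_num by fastforce
qed

end
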